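(* Let $\varphi\colon A^*\to A^*$ be a non-erasing substitution extending over $a\in A$, let $I_\varphi$ be the set of $\varphi$-growing letters, and suppose the set $B_\varphi$ of $\varphi$-bounded factors of $\varphi^{\infty}(a)$ (including the empty word) is finite. Let $C$ be the finite alphabet of symbols $[twt']$ with $t,t'\in I_\varphi$, $w\in B_\varphi$ and $twt'$ a factor of $\varphi^{\infty}(a)$, and define $\psi\colon C^*\to C^*$ by $\psi([twt'])=[t_1w_1t_2][t_2w_2t_3]\cdots[t_kw_kt_{k+1}]$, where $\varphi(tw)=w_0t_1w_1t_2\cdots t_kw_k'$ with $t_i\in I_\varphi$ and $w_i,w_k'\in B_\varphi$, $\varphi(t')$ begins with $w_k''t_{k+1}$ with $t_{k+1}\in I_\varphi$, $w_k''\in B_\varphi$, and $w_k=w_k'w_k''$. Then every letter of $C$ is $\psi$-growing.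
   Context: A substitution is non-erasing if no letter is mapped to the empty word. $\varphi$ extends over $a$ if $\varphi(a)=av$ with $\varphi^k(v)\neq\varepsilon$ for all $k$, and then $\varphi^{\infty}(a)=av\varphi(v)\varphi^2(v)\cdots$. A finite word $w$ is $\varphi$-bounded if the sequence $(|\varphi^n(w)|)_n$ is bounded (equivalently $w,\varphi(w),\varphi^2(w),\dots$ is ultimately periodic), and $\varphi$-growing otherwise; a letter $c\in C$ is $\psi$-growing if $|\psi^n(c)|\to\infty$. *)

theory Defs
  imports Complex_Main
begin

definition subst_word :: "('a \<Rightarrow> 'b list) \<Rightarrow> 'a list \<Rightarrow> 'b list" where
  "subst_word f w = concat (map f w)"

definition iter_subst :: "('a \<Rightarrow> 'a list) \<Rightarrow> nat \<Rightarrow> 'a list \<Rightarrow> 'a list" where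
  "iter_subst f n = (subst_word f ^^ n)"

definition non_erasing :: "('a \<Rightarrow> 'a list) \<Rightarrow> bool" where
  "non_erasing f \<longleftrightarrow> (\<forall>c. f c \<noteq> [])"

definition extends_over :: "('a \<Rightarrow> 'a list) \<Rightarrow> 'a \<Rightarrow> bool" where
  "extends_over f a \<longleftrightarrow>
     (\<exists>v. f a = a # v \<and> (\<forall>k. iter_subst f k v \<noteq> []))"

text \<open>Finite prefixes \<open>a v \<phi>(v) \<dots> \<phi>^{n-1}(v)\<close> of \<open>\<phi>^\<infinity>(a)\<close>, where \<open>\<phi>(a) = a v\<close>.\<close>
definition inf_prefix :: "('a \<Rightarrow> 'a list) \<Rightarrow> 'a \<Rightarrow> nat \<Rightarrow> 'a list" where
  "inf_prefix f a n = a # concat (map (\<lambda>k. iter_subst f k (tl (f a))) [0..<n])"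

text \<open>The infinite word \<open>\<phi>^\<infinity>(a) = a v \<phi>(v) \<phi>^2(v) \<dots>\<close> (letter at position \<open>i\<close>;
  when \<open>\<phi>\<close> extends over \<open>a\<close>, the prefix of index \<open>Suc i\<close> has length \<open>> i\<close>).\<close>
definition inf_word :: "('a \<Rightarrow> 'a list) \<Rightarrow> 'a \<Rightarrow> nat \<Rightarrow> 'a" where
  "inf_word f a i = inf_prefix f a (Suc i) ! i"

definition is_factor :: "(nat \<Rightarrow> 'a) \<Rightarrow> 'a list \<Rightarrow> bool" where
  "is_factor x w \<longleftrightarrow> (\<exists>i. w = map x [i..<i + length w])"

definition bounded_word :: "('a \<Rightarrow> 'a list) \<Rightarrow> 'a list \<Rightarrow> bool" where
  "bounded_word f w \<longleftrightarrow> bdd_above (range (\<lambda>n. length (iter_subst f n w)))"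

definition growing_letters :: "('a \<Rightarrow> 'a list) \<Rightarrow> 'a set" where
  "growing_letters f = {c. \<not> bounded_word f [c]}"

definition bounded_factors :: "('a \<Rightarrow> 'a list) \<Rightarrow> 'a \<Rightarrow> 'a list set" where
  "bounded_factors f a = {w. is_factor (inf_word f a) w \<and> bounded_word f w}"

definition C_alph :: "('a \<Rightarrow> 'a list) \<Rightarrow> 'a \<Rightarrow> ('a \<times> 'a list \<times> 'a) set" where
  "C_alph f a = {(t, w, t'). t \<in> growing_letters f \<and> t' \<in> growing_letters f \<and>
      w \<in> bounded_factors f a \<and> is_factor (inf_word f a) (t # w @ [t'])}"

text \<open>Unique decomposition of a word as \<open>w_0 t_1 w_1 \<dots> t_k w_k\<close>, where the \<open>t_i\<close>
  are exactly the occurrences of letters satisfying \<open>P\<close>. Result: \<open>(w_0, [(t_1,w_1),\<dots>,(t_k,w_k)])\<close>.\<close>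
fun grow_split :: "('a \<Rightarrow> bool) \<Rightarrow> 'a list \<Rightarrow> 'a list \<times> ('a \<times> 'a list) list" where
  "grow_split P [] = ([], [])"
| "grow_split P (x # xs) =
     (case grow_split P xs of (u, bs) \<Rightarrow>
        if P x then ([], (x, u) # bs) else (x # u, bs))"

definition psi :: "('a \<Rightarrow> 'a list) \<Rightarrow> ('a \<times> 'a list \<times> 'a) \<Rightarrow> ('a \<times> 'a list \<times> 'a) list" where
  "psi f s = (case s of (t, w, t') \<Rightarrow>
     (let G = (\<lambda>c. c \<in> growing_letters f);
          bs = snd (grow_split G (subst_word f (t # w)));
          (w'', bs') = grow_split G (f t');
          ts = map fst bs @ [fst (hd bs')];
          ws = map snd (butlast bs) @ [snd (last bs) @ w'']
      in map (\<lambda>i. (ts ! i, ws ! i, ts ! Suc i)) [0..<length bs]))"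

end

theory Submission
  imports Defs "HOL-Library.Sublist"
begin

(* Call a triple (t, w, t') marked if t, t' are growing letters and w is a
   bounded word; every symbol of C is marked.  Reading a word S of marked triples as the
   word  spell S = t\<^sub>1 w\<^sub>1 t\<^sub>2 w\<^sub>2 ...  over A, the definition of psi gives, for a marked symbol
   [t w t'],   phi(t w) w'' = w\<^sub>0 spell(psi [t w t'])   with w\<^sub>0, w'' bounded.  Bounded words
   contain no growing letters and stay bounded under phi, so by induction
        |psi^n(S)| = number of growing letters in phi^n(spell S).
   For the symbol [t w t'] this is at least the number of growing letters in phi^n(t).
   That number is non-decreasing in n (a growing letter has a growing letter in its
   image), and it is unbounded: otherwise phi^n(t), whose maximal runs of non-growing
   letters are bounded factors of phi^infinity(a), would have bounded length, since the
   finiteness of B_phi bounds the length of such runs; but t is growing.  The argument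
   does not need the hypothesis that phi is non-erasing. *)

lemma subst_word_Nil [simp]: "subst_word f [] = []"
  by (simp add: subst_word_def)

lemma subst_word_append [simp]: "subst_word f (u @ v) = subst_word f u @ subst_word f v"
  by (simp add: subst_word_def)

lemma subst_word_Cons: "subst_word f (c # u) = f c @ subst_word f u"
  by (simp add: subst_word_def)

lemma subst_word_single [simp]: "subst_word f [c] = f c"
  by (simp add: subst_word_def)

lemma set_subst_word: "set (subst_word f u) = (\<Union>c\<in>set u. set (f c))"
  by (simp add: subst_word_def)

lemma iter_subst_0 [simp]: "iter_subst f 0 w = w"
  by (simp add: iter_subst_def)

lemma iter_subst_Suc: "iter_subst f (Suc n) w = subst_word f (iter_subst f n w)"
  by (simp add: iter_subst_def)

lemma iter_subst_Suc_inner: "iter_subst f (Suc n) w = iter_subst f n (subst_word f w)"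
  by (simp add: iter_subst_def funpow_Suc_right del: funpow.simps)

lemma iter_subst_add: "iter_subst f m (iter_subst f n w) = iter_subst f (m + n) w"
  by (simp add: iter_subst_def funpow_add)

lemma iter_subst_Nil [simp]: "iter_subst f n [] = []"
  by (induction n) (auto simp: iter_subst_Suc)

lemma iter_subst_append [simp]: "iter_subst f n (u @ v) = iter_subst f n u @ iter_subst f n v"
  by (induction n) (auto simp: iter_subst_Suc)

lemma iter_subst_Cons: "iter_subst f n (c # v) = iter_subst f n [c] @ iter_subst f n v"
  using iter_subst_append[of f n "[c]" v] by simp

lemma iter_subst_sublist:
  "sublist u v \<Longrightarrow> sublist (iter_subst f n u) (iter_subst f n v)"
  by (auto simp: sublist_def) blast

lemma bounded_word_iff: "bounded_word f w \<longleftrightarrow> (\<exists>B. \<forall>n. length (iter_subst f n w) \<le> B)"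
  by (auto simp: bounded_word_def bdd_above_def)

lemma bounded_word_sublist:
  assumes "bounded_word f v" "sublist u v"
  shows "bounded_word f u"
proof -
  from assms(1) obtain B where B: "\<And>n. length (iter_subst f n v) \<le> B"
    by (auto simp: bounded_word_iff)
  have "length (iter_subst f n u) \<le> B" for n
    using B[of n] sublist_length_le[OF iter_subst_sublist[OF assms(2)]] by (meson le_trans)
  then show ?thesis by (auto simp: bounded_word_iff)
qed

lemma bounded_word_append:
  assumes "bounded_word f u" "bounded_word f v"
  shows "bounded_word f (u @ v)"
proof -
  from assms obtain B1 B2 where "\<And>n. length (iter_subst f n u) \<le> B1"
    and "\<And>n. length (iter_subst f n v) \<le> B2" by (auto simp: bounded_word_iff)
  then have "length (iter_subst f n (u @ v)) \<le> B1 + B2" for n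
    by (simp add: add_mono)
  then show ?thesis by (auto simp: bounded_word_iff)
qed

lemma bounded_word_iterate:
  assumes "bounded_word f w"
  shows "bounded_word f (iter_subst f m w)"
proof -
  from assms obtain B where "\<And>n. length (iter_subst f n w) \<le> B" by (auto simp: bounded_word_iff)
  then show ?thesis by (auto simp: bounded_word_iff iter_subst_add)
qed

lemma bounded_word_iff_letters:
  "bounded_word f w \<longleftrightarrow> (\<forall>c\<in>set w. c \<notin> growing_letters f)"
proof
  assume w: "bounded_word f w"
  have "bounded_word f [c]" if "c \<in> set w" for c
    using that by (intro bounded_word_sublist[OF w]) (auto simp: sublist_def dest: split_list)
  then show "\<forall>c\<in>set w. c \<notin> growing_letters f"
    by (simp add: growing_letters_def)
next
  assume "\<forall>c\<in>set w. c \<notin> growing_letters f"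
  then show "bounded_word f w"
  proof (induction w)
    case Nil then show ?case by (auto simp: bounded_word_iff)
  next
    case (Cons c w)
    then show ?case
      using bounded_word_append[of f "[c]" w] by (simp add: growing_letters_def)
  qed
qed

lemma growing_letter_image:
  assumes "c \<in> growing_letters f"
  shows "\<exists>d\<in>set (f c). d \<in> growing_letters f"
proof (rule ccontr)
  assume "\<not> ?thesis"
  then obtain B where B: "\<And>n. length (iter_subst f n (f c)) \<le> B"
    using bounded_word_iff_letters[of f "f c"] by (auto simp: bounded_word_iff)
  have "length (iter_subst f n [c]) \<le> max 1 B" for n
    using B by (cases n) (auto simp: iter_subst_Suc_inner le_max_iff_disj)
  then show False using assms by (auto simp: growing_letters_def bounded_word_iff)
qed

definition growing_count :: "('a \<Rightarrow> 'a list) \<Rightarrow> 'a list \<Rightarrow> nat" where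
  "growing_count f u = length (filter (\<lambda>c. c \<in> growing_letters f) u)"

lemma growing_count_append [simp]:
  "growing_count f (u @ v) = growing_count f u + growing_count f v"
  by (simp add: growing_count_def)

lemma growing_count_bounded: "bounded_word f u \<Longrightarrow> growing_count f u = 0"
  by (simp add: growing_count_def filter_empty_conv bounded_word_iff_letters)

lemma growing_count_subst_word: "growing_count f u \<le> growing_count f (subst_word f u)"
proof (induction u)
  case Nil then show ?case by simp
next
  case (Cons c u)
  have "c \<in> growing_letters f \<Longrightarrow> 1 \<le> growing_count f (f c)"
    using growing_letter_image[of c f]
    by (auto simp: growing_count_def filter_empty_conv Suc_le_eq)
  then show ?case
    using Cons by (cases "c \<in> growing_letters f") (auto simp: subst_word_Cons growing_count_def)
qed

lemma growing_count_iter_mono: "mono (\<lambda>n. growing_count f (iter_subst f n u))"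
  by (rule mono_iff_le_Suc[THEN iffD2]) (simp add: iter_subst_Suc growing_count_subst_word)

(* A word with k letters satisfying P, whose factors free of P all have length at
   most L, splits into at most k + 1 such runs and thus has length at most k + (k+1) L. *)
lemma length_le_by_blocks:
  assumes "\<And>v. sublist v u \<Longrightarrow> \<forall>c\<in>set v. \<not> P c \<Longrightarrow> length v \<le> L"
  shows "length u \<le> length (filter P u) + (length (filter P u) + 1) * L"
  using assms
proof (induction u rule: length_induct)
  case (1 u)
  define block where "block = takeWhile (\<lambda>c. \<not> P c) u"
  define rest where "rest = dropWhile (\<lambda>c. \<not> P c) u"
  have u: "u = block @ rest" by (simp add: block_def rest_def)
  have block_free: "\<forall>c\<in>set block. \<not> P c" by (auto simp: block_def dest: set_takeWhileD)
  have block_len: "length block \<le> L" using "1.prems"[of block] u block_free by auto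
  show ?case
  proof (cases rest)
    case Nil
    then show ?thesis using u block_len block_free by (simp add: filter_empty_conv)
  next
    case (Cons p u')
    have "P p" using Cons hd_dropWhile[of "\<lambda>c. \<not> P c" u] by (simp add: rest_def)
    have "sublist v u" if "sublist v u'" for v
      using that u Cons by (auto simp: sublist_def) (metis append.assoc append_Cons)
    then have IH: "length u' \<le> length (filter P u') + (length (filter P u') + 1) * L"
      using "1.IH" "1.prems" u Cons by simp
    have "filter P u = p # filter P u'" using u Cons \<open>P p\<close> block_free by (simp add: filter_empty_conv)
    then show ?thesis using IH block_len u Cons by (simp add: algebra_simps)
  qed
qed

lemma nth_prefix: "prefix xs ys \<Longrightarrow> j < length xs \<Longrightarrow> ys ! j = xs ! j"
  by (auto simp: prefix_def nth_append)

lemma is_factor_iff_sublist_prefix: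
  "is_factor x u \<longleftrightarrow> (\<exists>m. sublist u (map x [0..<m]))"
proof
  assume "is_factor x u"
  then obtain i where "u = map x [i..<i + length u]" by (auto simp: is_factor_def)
  then have "map x [0..<i + length u] = map x [0..<i] @ u @ []"
    by (metis append_Nil2 le_add1 map_append upt_add_eq_append zero_le)
  then show "\<exists>m. sublist u (map x [0..<m])" by (metis sublist_appendI)
next
  assume "\<exists>m. sublist u (map x [0..<m])"
  then obtain m ps ss where m: "map x [0..<m] = ps @ u @ ss" by (auto simp: sublist_def)
  then have "u = take (length u) (drop (length ps) (map x [0..<m]))" by simp
  also have "\<dots> = map x [length ps..<length ps + length u]"
    using arg_cong[OF m, of length] by (simp add: take_map drop_map take_upt)
  finally show "is_factor x u" by (auto simp: is_factor_def)
qed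

lemma inf_prefix_Suc:
  "inf_prefix f a (Suc n) = inf_prefix f a n @ iter_subst f n (tl (f a))"
  by (simp add: inf_prefix_def)

lemma inf_prefix_mono: "n \<le> m \<Longrightarrow> prefix (inf_prefix f a n) (inf_prefix f a m)"
  by (induction m rule: dec_induct) (auto simp: inf_prefix_Suc intro: prefix_order.trans)

context
  fixes f :: "'a \<Rightarrow> 'a list" and a :: 'a
  assumes ext: "extends_over f a"
begin

lemma length_inf_prefix: "n < length (inf_prefix f a n)"
proof (induction n)
  case 0 then show ?case by (simp add: inf_prefix_def)
next
  case (Suc n)
  have "0 < length (iter_subst f n (tl (f a)))" using ext by (auto simp: extends_over_def)
  then show ?case using Suc.IH unfolding inf_prefix_Suc length_append by linarith
qed

lemma iter_subst_start: "iter_subst f n [a] = inf_prefix f a n"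
proof (induction n)
  case 0 then show ?case by (simp add: inf_prefix_def)
next
  case (Suc n)
  have fa: "f a = a # tl (f a)" using ext by (auto simp: extends_over_def)
  have "subst_word f (inf_prefix f a n) = inf_prefix f a (Suc n)" for n
    by (induction n) (use fa in \<open>simp_all add: inf_prefix_def iter_subst_Suc subst_word_def\<close>)
  then show ?case using Suc by (simp add: iter_subst_Suc)
qed

lemma inf_prefix_eq_map: "inf_prefix f a n = map (inf_word f a) [0..<length (inf_prefix f a n)]"
proof (rule nth_equalityI)
  fix j assume "j < length (inf_prefix f a n)"
  moreover have "prefix (inf_prefix f a (Suc j)) (inf_prefix f a (max n (Suc j)))"
    and "prefix (inf_prefix f a n) (inf_prefix f a (max n (Suc j)))"
    by (simp_all add: inf_prefix_mono)
  moreover have "j < length (inf_prefix f a (Suc j))" using length_inf_prefix[of "Suc j"] by simp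
  ultimately show "inf_prefix f a n ! j = map (inf_word f a) [0..<length (inf_prefix f a n)] ! j"
    by (simp add: inf_word_def) (metis nth_prefix)
qed simp

lemma is_factor_iff_sublist_iterate:
  "is_factor (inf_word f a) u \<longleftrightarrow> (\<exists>n. sublist u (iter_subst f n [a]))"
proof
  assume "is_factor (inf_word f a) u"
  then obtain m where "sublist u (map (inf_word f a) [0..<m])"
    by (auto simp: is_factor_iff_sublist_prefix)
  moreover have "prefix (map (inf_word f a) [0..<m]) (inf_prefix f a m)"
    using length_inf_prefix[of m] inf_prefix_eq_map[of m]
    by (metis less_imp_le_nat map_append prefix_def upt_add_eq_append le_add_diff_inverse zero_le)
  ultimately show "\<exists>n. sublist u (iter_subst f n [a])"
    by (metis iter_subst_start prefix_imp_sublist sublist_order.order.trans)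
next
  assume "\<exists>n. sublist u (iter_subst f n [a])"
  then show "is_factor (inf_word f a) u"
    by (metis is_factor_iff_sublist_prefix iter_subst_start inf_prefix_eq_map)
qed

lemma is_factor_iterate:
  assumes "is_factor (inf_word f a) u" "sublist v (iter_subst f n u)"
  shows "is_factor (inf_word f a) v"
proof -
  from assms(1) obtain m where "sublist u (iter_subst f m [a])"
    by (auto simp: is_factor_iff_sublist_iterate)
  then have "sublist (iter_subst f n u) (iter_subst f (n + m) [a])"
    by (metis iter_subst_add iter_subst_sublist)
  then show ?thesis
    using assms(2) is_factor_iff_sublist_iterate sublist_order.order.trans by blast
qed

end

lemma mono_unbounded_tendsto_at_top:
  fixes g :: "nat \<Rightarrow> nat"
  assumes "mono g" "\<And>M. \<exists>n. M \<le> g n"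
  shows "filterlim g at_top sequentially"
  unfolding filterlim_at_top eventually_sequentially
  using assms by (meson monoD order_trans)

(* The runs of non-growing letters in
   phi^n(u) lie in B_phi, so their length is at most the maximal length in B_phi. *)
lemma factor_bounded_by_growing_count:
  assumes ext: "extends_over f a" and fin: "finite (bounded_factors f a)"
    and u: "is_factor (inf_word f a) u"
    and M: "\<And>n. growing_count f (iter_subst f n u) \<le> M"
  shows "bounded_word f u"
proof -
  define L where "L = Max (length ` bounded_factors f a)"
  have "length (iter_subst f n u) \<le> M + (M + 1) * L" for n
  proof -
    let ?g = "growing_count f (iter_subst f n u)"
    have "length (iter_subst f n u) \<le> ?g + (?g + 1) * L"
      unfolding growing_count_def
    proof (rule length_le_by_blocks)
      fix v assume "sublist v (iter_subst f n u)" "\<forall>c\<in>set v. c \<notin> growing_letters f"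
      then have "v \<in> bounded_factors f a"
        using is_factor_iterate[OF ext u] by (simp add: bounded_factors_def bounded_word_iff_letters)
      then show "length v \<le> L" unfolding L_def using fin by simp
    qed
    also have "\<dots> \<le> M + (M + 1) * L" using M[of n] by (intro add_mono mult_right_mono) auto
    finally show ?thesis .
  qed
  then show ?thesis by (auto simp: bounded_word_iff)
qed

lemma growing_count_tendsto:
  assumes ext: "extends_over f a" and fin: "finite (bounded_factors f a)"
    and t: "t \<in> growing_letters f" and occ: "is_factor (inf_word f a) [t]"
  shows "filterlim (\<lambda>n. growing_count f (iter_subst f n [t])) at_top sequentially"
proof (rule mono_unbounded_tendsto_at_top[OF growing_count_iter_mono])
  fix M
  show "\<exists>n. M \<le> growing_count f (iter_subst f n [t])"
  proof (rule ccontr)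
    assume "\<not> ?thesis"
    then have "bounded_word f [t]"
      by (intro factor_bounded_by_growing_count[OF ext fin occ, of M]) (simp add: not_le less_imp_le)
    then show False using t by (simp add: growing_letters_def)
  qed
qed

lemma grow_split_decomp:
  "grow_split P xs = (u, bs) \<Longrightarrow>
     xs = u @ concat (map (\<lambda>(t, w). t # w) bs) \<and> (\<forall>c\<in>set u. \<not> P c) \<and>
     (\<forall>(t, w)\<in>set bs. P t \<and> (\<forall>c\<in>set w. \<not> P c))"
proof (induction xs arbitrary: u bs)
  case Nil then show ?case by simp
next
  case (Cons x xs)
  obtain u0 bs0 where "grow_split P xs = (u0, bs0)" by fastforce
  then show ?case using Cons.prems Cons.IH by (fastforce split: if_splits)
qed

definition marked_triples :: "('a \<Rightarrow> 'a list) \<Rightarrow> ('a \<times> 'a list \<times> 'a) set" where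
  "marked_triples f = {(t, w, t'). t \<in> growing_letters f \<and> t' \<in> growing_letters f \<and> bounded_word f w}"

definition spell :: "('a \<times> 'a list \<times> 'a) list \<Rightarrow> 'a list" where
  "spell S = concat (map (\<lambda>(t, w, t'). t # w) S)"

lemma spell_simps [simp]:
  "spell [] = []"
  "spell ((t, w, t') # S) = t # w @ spell S"
  "spell (S @ S') = spell S @ spell S'"
  by (simp_all add: spell_def)

definition symbol_chain :: "('a \<times> 'a list) list \<Rightarrow> 'a list \<Rightarrow> 'a \<Rightarrow> ('a \<times> 'a list \<times> 'a) list" where
  "symbol_chain bs w'' t\<^sub>1 =
     (let ts = map fst bs @ [t\<^sub>1]; ws = map snd (butlast bs) @ [snd (last bs) @ w'']
      in map (\<lambda>i. (ts ! i, ws ! i, ts ! Suc i)) [0..<length bs])"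

lemma spell_symbol_chain:
  assumes "bs \<noteq> []"
  shows "spell (symbol_chain bs w'' t\<^sub>1) = concat (map (\<lambda>(t, w). t # w) bs) @ w''"
proof -
  define ts where "ts = map fst bs @ [t\<^sub>1]"
  define ws where "ws = map snd (butlast bs) @ [snd (last bs) @ w'']"
  obtain bs0 t w where bs: "bs = bs0 @ [(t, w)]" using assms by (metis rev_exhaust surj_pair)
  have init: "map (\<lambda>i. ts ! i # ws ! i) [0..<length bs0] = map (\<lambda>(t, w). t # w) bs0"
    by (rule nth_equalityI) (auto simp: ts_def ws_def bs nth_append split: prod.split)
  have "spell (symbol_chain bs w'' t\<^sub>1) = concat (map (\<lambda>i. ts ! i # ws ! i) [0..<length bs])"
    by (simp add: symbol_chain_def spell_def ts_def ws_def o_def Let_def)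
  also have "\<dots> = concat (map (\<lambda>i. ts ! i # ws ! i) [0..<length bs0]) @ t # w @ w''"
    by (simp add: bs ts_def ws_def nth_append)
  finally show ?thesis by (simp add: init bs)
qed

lemma symbol_chain_marked:
  assumes "\<forall>(t, w)\<in>set bs. t \<in> growing_letters f \<and> bounded_word f w"
    and "bounded_word f w''" and "t\<^sub>1 \<in> growing_letters f"
  shows "set (symbol_chain bs w'' t\<^sub>1) \<subseteq> marked_triples f"
proof (cases "bs = []")
  case True then show ?thesis by (simp add: symbol_chain_def)
next
  case False
  define ts where "ts = map fst bs @ [t\<^sub>1]"
  define ws where "ws = map snd (butlast bs) @ [snd (last bs) @ w'']"
  have ts: "\<forall>t\<in>set ts. t \<in> growing_letters f" using assms by (auto simp: ts_def)
  have ws: "\<forall>w\<in>set ws. bounded_word f w"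
    using assms False by (cases bs rule: rev_cases)
      (auto simp: ws_def bounded_word_append dest: in_set_butlastD)
  have "length ts = Suc (length bs)" "length ws = length bs"
    using False by (simp_all add: ts_def ws_def)
  then have "(ts ! i, ws ! i, ts ! Suc i) \<in> marked_triples f" if "i < length bs" for i
    using that ts ws by (simp add: marked_triples_def)
  then show ?thesis by (auto simp: symbol_chain_def ts_def ws_def Let_def)
qed

lemma psi_decomposition:
  assumes s: "(t, w, t') \<in> marked_triples f"
  obtains w\<^sub>0 w'' where "bounded_word f w\<^sub>0" "bounded_word f w''"
    and "subst_word f (t # w) @ w'' = w\<^sub>0 @ spell (psi f (t, w, t'))"
    and "set (psi f (t, w, t')) \<subseteq> marked_triples f"
proof -
  define G where "G = (\<lambda>c. c \<in> growing_letters f)"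
  obtain w\<^sub>0 bs where split1: "grow_split G (subst_word f (t # w)) = (w\<^sub>0, bs)" by fastforce
  obtain w'' bs' where split2: "grow_split G (f t') = (w'', bs')" by fastforce
  note dec1 = grow_split_decomp[OF split1] and dec2 = grow_split_decomp[OF split2]
  have "t \<in> growing_letters f" "t' \<in> growing_letters f" using s by (auto simp: marked_triples_def)
  then have "bs \<noteq> []" "bs' \<noteq> []"
    using dec1 dec2 growing_letter_image[of t f] growing_letter_image[of t' f]
    by (auto simp: G_def subst_word_Cons)
  have psi: "psi f (t, w, t') = symbol_chain bs w'' (fst (hd bs'))"
    using split1 split2 by (simp add: psi_def symbol_chain_def G_def)
  show ?thesis
  proof
    show "bounded_word f w\<^sub>0" "bounded_word f w''"
      using dec1 dec2 by (simp_all add: bounded_word_iff_letters G_def)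
    show "subst_word f (t # w) @ w'' = w\<^sub>0 @ spell (psi f (t, w, t'))"
      using dec1 \<open>bs \<noteq> []\<close> by (simp add: psi spell_symbol_chain)
    have "fst (hd bs') \<in> growing_letters f"
      using dec2 \<open>bs' \<noteq> []\<close> by (cases bs') (auto simp: G_def)
    then show "set (psi f (t, w, t')) \<subseteq> marked_triples f"
      unfolding psi using dec1 dec2
      by (intro symbol_chain_marked) (auto simp: bounded_word_iff_letters G_def)
  qed
qed

lemma growing_count_psi:
  assumes "s \<in> marked_triples f"
  shows "growing_count f (iter_subst f n (spell (psi f s)))
           = growing_count f (iter_subst f (Suc n) (spell [s]))"
proof -
  obtain t w t' where s: "s = (t, w, t')" by (cases s)
  obtain w\<^sub>0 w'' where bounded: "bounded_word f w\<^sub>0" "bounded_word f w''"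
    and eq: "subst_word f (t # w) @ w'' = w\<^sub>0 @ spell (psi f s)"
    using psi_decomposition assms s by metis
  have zero: "growing_count f (iter_subst f n v) = 0" if "bounded_word f v" for v
    using that by (intro growing_count_bounded bounded_word_iterate)
  have "growing_count f (iter_subst f n (spell (psi f s)))
          = growing_count f (iter_subst f n (w\<^sub>0 @ spell (psi f s)))"
    using zero[OF bounded(1)] by simp
  also have "\<dots> = growing_count f (iter_subst f n (subst_word f (t # w) @ w''))"
    by (simp only: eq)
  also have "\<dots> = growing_count f (iter_subst f (Suc n) (t # w))"
    using zero[OF bounded(2)] by (simp add: iter_subst_Suc_inner)
  finally show ?thesis by (simp add: s)
qed

lemma psi_word_marked:
  "set S \<subseteq> marked_triples f \<Longrightarrow> set (subst_word (psi f) S) \<subseteq> marked_triples f"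
  by (auto simp: set_subst_word elim!: psi_decomposition[of _ _ _ f])

lemma growing_count_psi_word:
  "set S \<subseteq> marked_triples f \<Longrightarrow>
     growing_count f (iter_subst f n (spell (subst_word (psi f) S)))
       = growing_count f (iter_subst f (Suc n) (spell S))"
proof (induction S)
  case Nil then show ?case by simp
next
  case (Cons s S)
  have "spell (s # S) = spell [s] @ spell S" by (cases s) simp
  then show ?case
    using Cons growing_count_psi[of s f n] by (simp add: subst_word_Cons del: spell_simps(2))
qed

lemma length_iter_psi:
  "set S \<subseteq> marked_triples f \<Longrightarrow>
     length (iter_subst (psi f) n S) = growing_count f (iter_subst f n (spell S))"
proof (induction n arbitrary: S)
  case 0
  then show ?case
    by (induction S) (auto simp: marked_triples_def growing_count_def filter_empty_conv bounded_word_iff_letters)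
next
  case (Suc n)
  then show ?case
    by (simp add: iter_subst_Suc_inner[of "psi f"] psi_word_marked growing_count_psi_word)
qed

theorem proposition2:
  fixes \<phi> :: "'a::finite \<Rightarrow> 'a list" and a :: 'a
  assumes "non_erasing \<phi>"
    and "extends_over \<phi> a"
    and "finite (bounded_factors \<phi> a)"
  shows "\<forall>c \<in> C_alph \<phi> a.
           filterlim (\<lambda>n. length (iter_subst (psi \<phi>) n [c])) at_top sequentially"
proof
  fix c assume c: "c \<in> C_alph \<phi> a"
  then obtain t w t' where ct: "c = (t, w, t')" and t: "t \<in> growing_letters \<phi>"
    and factor: "is_factor (inf_word \<phi> a) (t # w @ [t'])"
    by (auto simp: C_alph_def)
  have marked: "c \<in> marked_triples \<phi>"
    using c ct by (auto simp: C_alph_def bounded_factors_def marked_triples_def)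
  have "sublist [t] (t # w @ [t'])" using sublist_appendI[of "[t]" "[]" "w @ [t']"] by simp
  then have "is_factor (inf_word \<phi> a) [t]"
    using is_factor_iterate[OF assms(2) factor, of "[t]" 0] by simp
  then have lim: "filterlim (\<lambda>n. growing_count \<phi> (iter_subst \<phi> n [t])) at_top sequentially"
    by (rule growing_count_tendsto[OF assms(2,3) t])
  have "growing_count \<phi> (iter_subst \<phi> n [t]) \<le> length (iter_subst (psi \<phi>) n [c])" for n
    using length_iter_psi[of "[c]" \<phi> n] marked ct iter_subst_Cons[of \<phi> n t w] by simp
  then show "filterlim (\<lambda>n. length (iter_subst (psi \<phi>) n [c])) at_top sequentially"
    by (intro filterlim_at_top_mono[OF lim]) simp
qed

end
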